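(* A $\mathsf V$-functor $m:M\to X$ is L-dense if, and only if, for all $\mathsf V$-functors $f,g:X\to Y$ with $f\cdot m=g\cdot m$ one has $f\cong g$.
   Context: Let $\mathsf V=(\mathsf V,\otimes,k)$ be a commutative unital quantale (complete lattice with commutative associative $\otimes$ having neutral element $k$, with $u\otimes(-)$ preserving suprema). A $\mathsf V$-category $(X,a)$ is a set with $a:X\times X\to\mathsf V$ such that $k\le a(x,x)$ and $a(x,y)\otimes a(y,z)\le a(x,z)$; a $\mathsf V$-functor $f:(X,a)\to(Y,b)$ satisfies $a(x,y)\le b(f(x),f(y))$. For $\mathsf V$-functors $f,g:X\to(Y,b)$, $f\cong g$ means $k\le b(f(x),g(x))$ and $k\le b(g(x),f(x))$ for all $x\in X$. A $\mathsf V$-functor $m:(M,c)\to(X,a)$ is L-dense if $a(x,x')=\bigvee_{z\in M}a(x,m(z))\otimes a(m(z),x')$ for all $x,x'\in X$. *)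

theory Defs
  imports Main
begin

definition quantale :: "('v::complete_lattice \<Rightarrow> 'v \<Rightarrow> 'v) \<Rightarrow> 'v \<Rightarrow> bool" where
  "quantale t k \<longleftrightarrow>
     (\<forall>u v w. t (t u v) w = t u (t v w)) \<and>
     (\<forall>u v. t u v = t v u) \<and>
     (\<forall>u. t k u = u) \<and>
     (\<forall>u S. t u (Sup S) = Sup (t u ` S))"

definition vcat :: "('v::complete_lattice \<Rightarrow> 'v \<Rightarrow> 'v) \<Rightarrow> 'v \<Rightarrow> 'x set \<Rightarrow> ('x \<Rightarrow> 'x \<Rightarrow> 'v) \<Rightarrow> bool" where
  "vcat t k X a \<longleftrightarrow>
     (\<forall>x\<in>X. k \<le> a x x) \<and>
     (\<forall>x\<in>X. \<forall>y\<in>X. \<forall>z\<in>X. t (a x y) (a y z) \<le> a x z)"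

definition vfun :: "'x set \<Rightarrow> ('x \<Rightarrow> 'x \<Rightarrow> 'v::complete_lattice) \<Rightarrow> 'y set \<Rightarrow> ('y \<Rightarrow> 'y \<Rightarrow> 'v) \<Rightarrow> ('x \<Rightarrow> 'y) \<Rightarrow> bool" where
  "vfun X a Y b f \<longleftrightarrow> f ` X \<subseteq> Y \<and> (\<forall>x\<in>X. \<forall>y\<in>X. a x y \<le> b (f x) (f y))"

definition viso :: "'v::complete_lattice \<Rightarrow> 'x set \<Rightarrow> ('y \<Rightarrow> 'y \<Rightarrow> 'v) \<Rightarrow> ('x \<Rightarrow> 'y) \<Rightarrow> ('x \<Rightarrow> 'y) \<Rightarrow> bool" where
  "viso k X b f g \<longleftrightarrow> (\<forall>x\<in>X. k \<le> b (f x) (g x) \<and> k \<le> b (g x) (f x))"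

definition Ldense :: "('v::complete_lattice \<Rightarrow> 'v \<Rightarrow> 'v) \<Rightarrow> 'm set \<Rightarrow> 'x set \<Rightarrow> ('x \<Rightarrow> 'x \<Rightarrow> 'v) \<Rightarrow> ('m \<Rightarrow> 'x) \<Rightarrow> bool" where
  "Ldense t M X a m \<longleftrightarrow> (\<forall>x\<in>X. \<forall>x'\<in>X. a x x' = (SUP z\<in>M. t (a x (m z)) (a (m z) x')))"

end

theory Submission
  imports Defs
begin

text \<open>Necessity: for x in X the unit k \<le> a x x spreads, by density, over all paths through the
image of m, on which f and g agree; transitivity of b then bounds each path by b (f x) (g x).
Sufficiency: test the condition on the V-category V itself (hom given by the residuum) with the
representable functor a x and the functor y \<mapsto> \<Squnion>z. a x (m z) \<otimes> a (m z) y. They agree on the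
image of m, so they are isomorphic, which is exactly the missing inequality of L-density.\<close>

lemma quantale_mult_mono_right:
  assumes "quantale t k" and "v \<le> w"
  shows "t u v \<le> t u w"
proof -
  have "t u (Sup {v, w}) = Sup (t u ` {v, w})"
    using \<open>quantale t k\<close> unfolding quantale_def by blast
  then have "t u w = sup (t u v) (t u w)"
    using \<open>v \<le> w\<close> by (simp add: sup_absorb2)
  then show ?thesis
    by (metis sup.cobounded1)
qed

lemma quantale_mult_mono:
  assumes q: "quantale t k" and "u \<le> u'" and "v \<le> v'"
  shows "t u v \<le> t u' v'"
proof -
  have comm: "\<And>x y. t x y = t y x"
    using q unfolding quantale_def by blast
  have "t u v \<le> t u v'"
    using quantale_mult_mono_right[OF q \<open>v \<le> v'\<close>] .
  also have "\<dots> \<le> t u' v'"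
    using quantale_mult_mono_right[OF q \<open>u \<le> u'\<close>] by (simp add: comm[of _ v'])
  finally show ?thesis .
qed

lemma quantale_mult_SUP:
  assumes "quantale t k"
  shows "t u (SUP i\<in>I. f i) = (SUP i\<in>I. t u (f i))"
  using assms unfolding quantale_def by (simp add: image_image)

lemma quantale_mult_unit_right:
  assumes "quantale t k"
  shows "t u k = u"
  using assms unfolding quantale_def by metis

definition residuum :: "('v::complete_lattice \<Rightarrow> 'v \<Rightarrow> 'v) \<Rightarrow> 'v \<Rightarrow> 'v \<Rightarrow> 'v" where
  "residuum t u v = Sup {w. t u w \<le> v}"

lemma residuum_adjoint:
  assumes "quantale t k"
  shows "w \<le> residuum t u v \<longleftrightarrow> t u w \<le> v"
proof
  assume "w \<le> residuum t u v"
  then have "t u w \<le> t u (Sup {w. t u w \<le> v})"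
    using quantale_mult_mono_right[OF assms] unfolding residuum_def by blast
  also have "\<dots> = Sup (t u ` {w. t u w \<le> v})"
    using assms unfolding quantale_def by blast
  also have "\<dots> \<le> v"
    by (auto intro: Sup_least)
  finally show "t u w \<le> v" .
next
  assume "t u w \<le> v"
  then show "w \<le> residuum t u v"
    unfolding residuum_def by (auto intro: Sup_upper)
qed

lemma unit_le_residuum_iff:
  assumes "quantale t k"
  shows "k \<le> residuum t u v \<longleftrightarrow> u \<le> v"
  using residuum_adjoint[OF assms] quantale_mult_unit_right[OF assms] by simp

lemma vcat_residuum:
  assumes q: "quantale t k"
  shows "vcat t k UNIV (residuum t)"
  unfolding vcat_def
proof (intro conjI ballI)
  fix u :: 'a
  show "k \<le> residuum t u u"
    using unit_le_residuum_iff[OF q] by simp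
next
  fix u v w :: 'a
  have assoc: "t (t x y) z = t x (t y z)" for x y z
    using q unfolding quantale_def by blast
  have "t u (t (residuum t u v) (residuum t v w)) = t (t u (residuum t u v)) (residuum t v w)"
    by (simp add: assoc)
  also have "\<dots> \<le> t v (residuum t v w)"
    using quantale_mult_mono[OF q _ order_refl] residuum_adjoint[OF q] by blast
  also have "\<dots> \<le> w"
    using residuum_adjoint[OF q] by blast
  finally show "t (residuum t u v) (residuum t v w) \<le> residuum t u w"
    using residuum_adjoint[OF q] by blast
qed

lemma vfun_representable:
  assumes "quantale t k" and "vcat t k X a" and "x \<in> X"
  shows "vfun X a UNIV (residuum t) (a x)"
  using assms unfolding vfun_def vcat_def by (simp add: residuum_adjoint)

lemma Ldense_agree_imp_unit_le:
  assumes q: "quantale t k" and X: "vcat t k X a" and m: "vfun M c X a m"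
    and dense: "Ldense t M X a m" and Y: "vcat t k Y b"
    and f: "vfun X a Y b f" and g: "vfun X a Y b g" and agree: "\<forall>z\<in>M. f (m z) = g (m z)"
    and "x \<in> X"
  shows "k \<le> b (f x) (g x)"
proof -
  have "k \<le> a x x"
    using X \<open>x \<in> X\<close> unfolding vcat_def by blast
  also have "\<dots> = (SUP z\<in>M. t (a x (m z)) (a (m z) x))"
    using dense \<open>x \<in> X\<close> unfolding Ldense_def by blast
  also have "\<dots> \<le> b (f x) (g x)"
  proof (rule SUP_least)
    fix z assume "z \<in> M"
    then have mz: "m z \<in> X"
      using m unfolding vfun_def by blast
    have "a x (m z) \<le> b (f x) (g (m z))"
      using f agree \<open>z \<in> M\<close> mz \<open>x \<in> X\<close> unfolding vfun_def by metis
    moreover have "a (m z) x \<le> b (g (m z)) (g x)"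
      using g mz \<open>x \<in> X\<close> unfolding vfun_def by blast
    ultimately have "t (a x (m z)) (a (m z) x) \<le> t (b (f x) (g (m z))) (b (g (m z)) (g x))"
      by (rule quantale_mult_mono[OF q])
    also have "\<dots> \<le> b (f x) (g x)"
    proof -
      have "f x \<in> Y" and "g (m z) \<in> Y" and "g x \<in> Y"
        using f g mz \<open>x \<in> X\<close> unfolding vfun_def by auto
      then show ?thesis
        using Y unfolding vcat_def by blast
    qed
    finally show "t (a x (m z)) (a (m z) x) \<le> b (f x) (g x)" .
  qed
  finally show ?thesis .
qed

lemma Ldense_agree_imp_viso:
  assumes "quantale t k" and "vcat t k X a" and "vfun M c X a m" and "Ldense t M X a m"
    and "vcat t k Y b" and "vfun X a Y b f" and "vfun X a Y b g"
    and "\<forall>z\<in>M. f (m z) = g (m z)"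
  shows "viso k X b f g"
  using Ldense_agree_imp_unit_le[OF assms(1-7)] Ldense_agree_imp_unit_le[OF assms(1-5,7,6)] assms(8)
  unfolding viso_def by simp

definition dense_part ::
    "('v::complete_lattice \<Rightarrow> 'v \<Rightarrow> 'v) \<Rightarrow> 'm set \<Rightarrow> ('x \<Rightarrow> 'x \<Rightarrow> 'v) \<Rightarrow> ('m \<Rightarrow> 'x) \<Rightarrow> 'x \<Rightarrow> 'x \<Rightarrow> 'v" where
  "dense_part t M a m x y = (SUP z\<in>M. t (a x (m z)) (a (m z) y))"

lemma dense_part_le:
  assumes "vcat t k X a" and "vfun M c X a m" and "x \<in> X" and "y \<in> X"
  shows "dense_part t M a m x y \<le> a x y"
  unfolding dense_part_def
proof (rule SUP_least)
  fix z assume "z \<in> M"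
  then have "m z \<in> X"
    using \<open>vfun M c X a m\<close> unfolding vfun_def by blast
  then show "t (a x (m z)) (a (m z) y) \<le> a x y"
    using \<open>vcat t k X a\<close> \<open>x \<in> X\<close> \<open>y \<in> X\<close> unfolding vcat_def by blast
qed

lemma dense_part_image:
  assumes q: "quantale t k" and X: "vcat t k X a" and m: "vfun M c X a m"
    and "x \<in> X" and "z \<in> M"
  shows "dense_part t M a m x (m z) = a x (m z)"
proof (rule order.antisym)
  have mz: "m z \<in> X"
    using m \<open>z \<in> M\<close> unfolding vfun_def by blast
  then show "dense_part t M a m x (m z) \<le> a x (m z)"
    by (rule dense_part_le[OF X m \<open>x \<in> X\<close>])
  have "a x (m z) = t (a x (m z)) k"
    using quantale_mult_unit_right[OF q] by simp
  also have "\<dots> \<le> t (a x (m z)) (a (m z) (m z))"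
    using X mz unfolding vcat_def by (simp add: quantale_mult_mono_right[OF q])
  also have "\<dots> \<le> dense_part t M a m x (m z)"
    unfolding dense_part_def using \<open>z \<in> M\<close> by (rule SUP_upper2) simp
  finally show "a x (m z) \<le> dense_part t M a m x (m z)" .
qed

lemma vfun_dense_part:
  assumes q: "quantale t k" and X: "vcat t k X a" and m: "vfun M c X a m" and "x \<in> X"
  shows "vfun X a UNIV (residuum t) (dense_part t M a m x)"
  unfolding vfun_def
proof (intro conjI ballI)
  fix y w assume "y \<in> X" and "w \<in> X"
  have comm: "t u v = t v u" and assoc: "t (t u v) s = t u (t v s)" for u v s
    using q unfolding quantale_def by blast+
  have "t (dense_part t M a m x y) (a y w) = (SUP z\<in>M. t (a x (m z)) (t (a (m z) y) (a y w)))"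
    unfolding dense_part_def
    by (simp add: comm[of _ "a y w"] quantale_mult_SUP[OF q])
      (metis (no_types) comm assoc)
  also have "\<dots> \<le> dense_part t M a m x w"
    unfolding dense_part_def
  proof (rule SUP_mono)
    fix z assume "z \<in> M"
    then have "t (a (m z) y) (a y w) \<le> a (m z) w"
      using X m \<open>y \<in> X\<close> \<open>w \<in> X\<close> unfolding vcat_def vfun_def by blast
    then show "\<exists>z'\<in>M. t (a x (m z)) (t (a (m z) y) (a y w)) \<le> t (a x (m z')) (a (m z') w)"
      using \<open>z \<in> M\<close> quantale_mult_mono_right[OF q] by blast
  qed
  finally show "a y w \<le> residuum t (dense_part t M a m x y) (dense_part t M a m x w)"
    using residuum_adjoint[OF q] by blast
qed simp

lemma agree_imp_viso_imp_Ldense: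
  fixes t :: "'v::complete_lattice \<Rightarrow> 'v \<Rightarrow> 'v"
  assumes q: "quantale t k" and X: "vcat t k X a" and m: "vfun M c X a m"
    and iso: "\<forall>(Y :: 'v set) b f g. vcat t k Y b \<longrightarrow> vfun X a Y b f \<longrightarrow> vfun X a Y b g \<longrightarrow>
               (\<forall>z\<in>M. f (m z) = g (m z)) \<longrightarrow> viso k X b f g"
  shows "Ldense t M X a m"
  unfolding Ldense_def
proof (intro ballI order.antisym)
  fix x y assume "x \<in> X" and "y \<in> X"
  have "\<forall>z\<in>M. a x (m z) = dense_part t M a m x (m z)"
    using dense_part_image[OF q X m \<open>x \<in> X\<close>] by simp
  then have "viso k X (residuum t) (a x) (dense_part t M a m x)"
    using iso vcat_residuum[OF q] vfun_representable[OF q X \<open>x \<in> X\<close>]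
      vfun_dense_part[OF q X m \<open>x \<in> X\<close>] by blast
  then have "k \<le> residuum t (a x y) (dense_part t M a m x y)"
    using \<open>y \<in> X\<close> unfolding viso_def by blast
  then show "a x y \<le> (SUP z\<in>M. t (a x (m z)) (a (m z) y))"
    unfolding unit_le_residuum_iff[OF q] dense_part_def .
  show "(SUP z\<in>M. t (a x (m z)) (a (m z) y)) \<le> a x y"
    using dense_part_le[OF X m \<open>x \<in> X\<close> \<open>y \<in> X\<close>] unfolding dense_part_def .
qed

theorem mainTheorem5:
  fixes t :: "'v::complete_lattice \<Rightarrow> 'v \<Rightarrow> 'v" and k :: 'v
    and M :: "'m set" and c :: "'m \<Rightarrow> 'm \<Rightarrow> 'v"
    and X :: "'x set" and a :: "'x \<Rightarrow> 'x \<Rightarrow> 'v"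
    and m :: "'m \<Rightarrow> 'x"
  assumes "quantale t k" and "vcat t k M c" and "vcat t k X a" and "vfun M c X a m"
  shows "(Ldense t M X a m \<longrightarrow>
            (\<forall>(Y :: 'y set) b f g. vcat t k Y b \<longrightarrow> vfun X a Y b f \<longrightarrow> vfun X a Y b g \<longrightarrow>
               (\<forall>z\<in>M. f (m z) = g (m z)) \<longrightarrow> viso k X b f g))
       \<and> ((\<forall>(Y :: 'v set) b f g. vcat t k Y b \<longrightarrow> vfun X a Y b f \<longrightarrow> vfun X a Y b g \<longrightarrow>
               (\<forall>z\<in>M. f (m z) = g (m z)) \<longrightarrow> viso k X b f g)
            \<longrightarrow> Ldense t M X a m)"
  using Ldense_agree_imp_viso[OF assms(1,3,4)] agree_imp_viso_imp_Ldense[OF assms(1,3,4)]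
  by blast

end
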